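(* Let $(X,\|\cdot\|)$ be a normed linear space, let $I$ be a non-trivial admissible ideal in $\mathbb{N}$, let $x=\{x_k\}_{k\in\mathbb{N}}$ be a sequence in $X$ and let $r>0$. Then the set $I\text{-}st\text{-}\mathrm{LIM}_x^r$ is convex.
   Context: An ideal $I$ in $\mathbb{N}$ is a family of subsets of $\mathbb{N}$ containing $\emptyset$, closed under finite unions and under taking subsets; it is non-trivial if $\mathbb{N}\notin I$ and admissible if $\{n\}\in I$ for every $n$. For $r\ge0$, $x$ is $r$-$I$-statistically convergent to $\xi\in X$ if for every $\varepsilon>0$ and $\delta>0$, $\{n\in\mathbb{N}:\frac1n|\{k\le n:\|x_k-\xi\|\ge r+\varepsilon\}|\ge\delta\}\in I$; $I\text{-}st\text{-}\mathrm{LIM}_x^r$ is the set of all such $\xi$. *)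

theory Defs
  imports "HOL-Analysis.Analysis"
begin

text \<open>An ideal in the natural numbers (here the type nat; the index 0 is immaterial
since admissible ideals contain all singletons).\<close>
definition nat_ideal :: "nat set set \<Rightarrow> bool" where
  "nat_ideal I \<longleftrightarrow> {} \<in> I \<and> (\<forall>A\<in>I. \<forall>B\<in>I. A \<union> B \<in> I) \<and> (\<forall>A\<in>I. \<forall>B. B \<subseteq> A \<longrightarrow> B \<in> I)"

definition nontrivial_ideal :: "nat set set \<Rightarrow> bool" where
  "nontrivial_ideal I \<longleftrightarrow> UNIV \<notin> I"

definition admissible_ideal :: "nat set set \<Rightarrow> bool" where
  "admissible_ideal I \<longleftrightarrow> (\<forall>n. {n} \<in> I)"

text \<open>r-I-statistical convergence; sequence terms are x 1, x 2, ... (x 0 unused),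
and n ranges over positive naturals.\<close>
definition rI_st_conv :: "nat set set \<Rightarrow> real \<Rightarrow> (nat \<Rightarrow> 'a::real_normed_vector) \<Rightarrow> 'a \<Rightarrow> bool" where
  "rI_st_conv I r x \<xi> \<longleftrightarrow>
     (\<forall>\<epsilon>>0. \<forall>\<delta>>0.
        {n. n \<ge> 1 \<and> real (card {k \<in> {1..n}. norm (x k - \<xi>) \<ge> r + \<epsilon>}) / real n \<ge> \<delta>} \<in> I)"

definition I_st_LIM :: "nat set set \<Rightarrow> real \<Rightarrow> (nat \<Rightarrow> 'a::real_normed_vector) \<Rightarrow> 'a set" where
  "I_st_LIM I r x = {\<xi>. rI_st_conv I r x \<xi>}"

end

theory Submission
  imports Defs
begin

text \<open>If c is at distance at least s from a convex combination of a and b, it is at distance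
  at least s from a or from b, since open balls are convex. Hence every index counted for the
  combination is counted for a or for b, and a density of at least \<delta> for the combination forces
  a density of at least \<delta>/2 for one of the two limits; closure of I under unions and subsets
  finishes the argument.\<close>

lemma far_from_convex_combination:
  fixes a b c :: "'a::real_normed_vector"
  assumes "0 \<le> u" "0 \<le> v" "u + v = 1" "s \<le> norm (c - (u *\<^sub>R a + v *\<^sub>R b))"
  shows "s \<le> norm (c - a) \<or> s \<le> norm (c - b)"
proof (rule ccontr)
  assume "\<not> ?thesis"
  then have "a \<in> ball c s" "b \<in> ball c s"
    by (auto simp: dist_norm)
  then have "u *\<^sub>R a + v *\<^sub>R b \<in> ball c s"
    using convex_ball assms(1-3) unfolding convex_def by blast
  then show False
    using assms(4) by (simp add: dist_norm)
qed

lemma density_ge_subset_Un: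
  fixes A B C :: "nat \<Rightarrow> nat set"
  assumes "\<And>n. A n \<subseteq> B n \<union> C n" "\<And>n. finite (B n)" "\<And>n. finite (C n)"
  shows "{n. 1 \<le> n \<and> \<delta> \<le> real (card (A n)) / real n}
    \<subseteq> {n. 1 \<le> n \<and> \<delta> / 2 \<le> real (card (B n)) / real n}
      \<union> {n. 1 \<le> n \<and> \<delta> / 2 \<le> real (card (C n)) / real n}"
proof safe
  fix n :: nat
  assume n: "1 \<le> n" "\<delta> \<le> real (card (A n)) / real n"
    and not_C: "\<not> \<delta> / 2 \<le> real (card (C n)) / real n"
  have "card (A n) \<le> card (B n) + card (C n)"
    using card_mono[of "B n \<union> C n" "A n"] card_Un_le[of "B n" "C n"] assms by (meson finite_UnI le_trans)
  then have "real (card (A n)) / real n \<le> real (card (B n)) / real n + real (card (C n)) / real n"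
    by (simp add: divide_right_mono flip: add_divide_distrib)
  with n not_C show "\<delta> / 2 \<le> real (card (B n)) / real n"
    by linarith
qed

lemma rI_st_conv_convex_combination:
  assumes "nat_ideal I" "rI_st_conv I r x a" "rI_st_conv I r x b"
    and "0 \<le> u" "0 \<le> v" "u + v = 1"
  shows "rI_st_conv I r x (u *\<^sub>R a + v *\<^sub>R b)"
  unfolding rI_st_conv_def
proof (intro allI impI)
  fix \<epsilon> \<delta> :: real
  assume "0 < \<epsilon>" "0 < \<delta>"
  define far where "far \<xi> n = {k \<in> {1..n}. r + \<epsilon> \<le> norm (x k - \<xi>)}" for \<xi> n
  have "{n. 1 \<le> n \<and> \<delta> / 2 \<le> real (card (far \<xi> n)) / real n} \<in> I"
    if "rI_st_conv I r x \<xi>" for \<xi>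
  proof -
    have "0 < \<delta> / 2"
      using \<open>0 < \<delta>\<close> by simp
    with that \<open>0 < \<epsilon>\<close> show ?thesis
      unfolding rI_st_conv_def far_def by blast
  qed
  then have far_ab: "{n. 1 \<le> n \<and> \<delta> / 2 \<le> real (card (far a n)) / real n}
      \<union> {n. 1 \<le> n \<and> \<delta> / 2 \<le> real (card (far b n)) / real n} \<in> I"
    using assms(1-3) unfolding nat_ideal_def by blast
  have far_Un: "far (u *\<^sub>R a + v *\<^sub>R b) n \<subseteq> far a n \<union> far b n" for n
    using far_from_convex_combination[OF assms(4-6)] unfolding far_def by blast
  have finite_far: "finite (far \<xi> n)" for \<xi> n
    unfolding far_def by simp
  have "{n. 1 \<le> n \<and> \<delta> \<le> real (card (far (u *\<^sub>R a + v *\<^sub>R b) n)) / real n}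
      \<subseteq> {n. 1 \<le> n \<and> \<delta> / 2 \<le> real (card (far a n)) / real n}
        \<union> {n. 1 \<le> n \<and> \<delta> / 2 \<le> real (card (far b n)) / real n}"
    by (rule density_ge_subset_Un[OF far_Un finite_far finite_far])
  with far_ab have "{n. 1 \<le> n \<and> \<delta> \<le> real (card (far (u *\<^sub>R a + v *\<^sub>R b) n)) / real n} \<in> I"
    using assms(1) unfolding nat_ideal_def by blast
  then show "{n. 1 \<le> n \<and> \<delta> \<le> real (card {k \<in> {1..n}. r + \<epsilon> \<le> norm (x k - (u *\<^sub>R a + v *\<^sub>R b))}) / real n} \<in> I"
    unfolding far_def .
qed

theorem theorem3p4:
  fixes I :: "nat set set" and x :: "nat \<Rightarrow> 'a::real_normed_vector" and r :: real
  assumes "nat_ideal I" and "nontrivial_ideal I" and "admissible_ideal I"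
    and "r > 0"
  shows "convex (I_st_LIM I r x)"
  using rI_st_conv_convex_combination[OF assms(1)]
  unfolding convex_def I_st_LIM_def by blast

end
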